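(* In the setting described in the context, let $x\in\mathbb S^1_{\mathbb C}=\{x\in\mathbb C^2:\|x\|=1\}$ and $z=\pi(x)$. Then $$\log\|T^{\epsilon,\delta}_\sigma x\|=2\epsilon\frac{\mathrm{Re}(\beta_\sigma z)}{1+|z|^2}+\epsilon^2|\beta_\sigma|^2\frac{1+|z|^4}{(1+|z|^2)^2}+\delta\,q_{3,\sigma}\frac{1-|z|^2}{1+|z|^2}+2\epsilon^2\Big[\frac{\mathrm{Re}([\beta'_\sigma+\imath p_{3,\sigma}\beta_\sigma]z)}{1+|z|^2}-\frac{\mathrm{Re}(\beta_\sigma^2z^2)}{(1+|z|^2)^2}\Big]+\mathcal O(\epsilon^3,\epsilon\delta,\delta^2).$$
   Context: Notation: $J=\mathrm{diag}(1,-1)$; $\mathrm{SU}(1,1)=\{T:T^*JT=J,\det T=1\}$; $\mathrm{SU}_\le(1,1)=\{T:T^*JT\le J,\det T=1\}$; $\mathfrak{su}(1,1)=\{A:A^*J=-JA,\mathrm{Tr}A=0\}$ with basis $B_1=\begin{pmatrix}0&1\\1&0\end{pmatrix}$, $B_2=\begin{pmatrix}0&\imath\\-\imath&0\end{pmatrix}$, $B_3=\begin{pmatrix}\imath&0\\0&-\imath\end{pmatrix}$; $R_\eta=\mathrm{diag}(e^{\imath\eta},e^{-\imath\eta})$. The stereographic projection $\pi:\mathbb S^1_{\mathbb C}\to\overline{\mathbb C}$ is $\pi\binom ab=ab^{-1}$ if $b\ne0$ and $\infty$ if $b=0$. Setting: $(\Sigma,\mathbb P)$ a probability space; for real $(\epsilon,\delta)$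 near $(0,0)$ a random family $T^{\epsilon,\delta}_\sigma\in\mathrm{SL}(2,\mathbb C)$ with: (i) $C^2$ in $(\epsilon,\delta)$; (ii) $T^{0,0}_\sigma=R_{\eta_\sigma}$; (iii) $T^{\epsilon,0}_\sigma\in\mathrm{SU}(1,1)$; (iv) $T^{0,\imath\delta}_\sigma\in\mathrm{SU}(1,1)$; (v) $T^{\epsilon,\delta}_\sigma\in\mathrm{SU}_\le(1,1)$ for $\delta\ge0$; $T^{\epsilon,\delta}_\sigma=R_{\eta_\sigma}\exp[\epsilon P_\sigma+\epsilon^2P'_\sigma+\imath\delta Q_\sigma+\mathcal O(\epsilon^3,\epsilon\delta,\delta^2)]$ with $P_\sigma,P'_\sigma,Q_\sigma\in\mathfrak{su}(1,1)$ (vi) uniformly bounded and (vii) the error term bounded by $C(\epsilon^3+\epsilon\delta+\delta^2)$ uniformly; (viii) for $(\epsilon,\delta)\ne(0,0)$ no finite $F\subset\overline{\mathbb C}$ with $\mathrm{supp}(T^{\epsilon,\delta}_\sigma)\cdot F\subset F$; (ix) the generated semigroup is not relatively compact. Write $P_\sigma=\sum_jp_{j,\sigma}B_j$, $P'_\sigma=\sum_jp'_{j,\sigma}B_j$, $Q_\sigma=\sum_jq_{j,\sigma}B_j$ with real coefficients, $\beta_\sigma=p_{1,\sigma}-\imath p_{2,\sigma}$, $\beta'_\sigma=p'_{1,\sigma}-\imath p'_{2,\sigma}$. $\mathcal O(\cdot)$: bounded by a uniform constant times the sum of listed quantities. *)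

theory Defs
  imports "HOL-Analysis.Analysis" "HOL-Probability.Probability"
begin

type_synonym cmat = "complex^2^2"
type_synonym cvec = "complex^2"

definition mk2 :: "complex \<Rightarrow> complex \<Rightarrow> complex \<Rightarrow> complex \<Rightarrow> cmat" where
  "mk2 a b c d = vector [vector [a, b], vector [c, d]]"

definition cscale :: "complex \<Rightarrow> cmat \<Rightarrow> cmat" where
  "cscale c A = (\<chi> i j. c * A $ i $ j)"

definition Jm :: cmat where "Jm = mk2 1 0 0 (-1)"

definition madj :: "cmat \<Rightarrow> cmat" where
  "madj A = (\<chi> i j. cnj (A $ j $ i))"

definition hform :: "cmat \<Rightarrow> cvec \<Rightarrow> complex" where
  "hform M v = (\<Sum>i\<in>UNIV. cnj (v $ i) * (M *v v) $ i)"

definition mle :: "cmat \<Rightarrow> cmat \<Rightarrow> bool" where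
  "mle A B \<longleftrightarrow> madj (B - A) = B - A \<and> (\<forall>v. 0 \<le> Re (hform (B - A) v))"

definition SU11 :: "cmat set" where
  "SU11 = {T. madj T ** Jm ** T = Jm \<and> det T = 1}"

definition SU11_le :: "cmat set" where
  "SU11_le = {T. mle (madj T ** Jm ** T) Jm \<and> det T = 1}"

definition su11 :: "cmat set" where
  "su11 = {A. madj A ** Jm = - (Jm ** A) \<and> trace A = 0}"

definition B1 :: cmat where "B1 = mk2 0 1 1 0"
definition B2 :: cmat where "B2 = mk2 0 \<i> (-\<i>) 0"
definition B3 :: cmat where "B3 = mk2 \<i> 0 0 (-\<i>)"

definition Rot :: "real \<Rightarrow> cmat" where
  "Rot eta = mk2 (exp (\<i> * of_real eta)) 0 0 (exp (- \<i> * of_real eta))"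

primrec mpow :: "cmat \<Rightarrow> nat \<Rightarrow> cmat" where
  "mpow A 0 = mat 1"
| "mpow A (Suc n) = A ** mpow A n"

definition mexp :: "cmat \<Rightarrow> cmat" where
  "mexp A = (\<Sum>n. (1 / (fact n :: real)) *\<^sub>R mpow A n)"

text \<open>stereographic projection S^1_C \<rightarrow> extended complex plane; None represents \<infinity>\<close>
definition proj :: "cvec \<Rightarrow> complex option" where
  "proj v = (if v $ 2 = 0 then None else Some (v $ 1 / v $ 2))"

text \<open>Moebius action of a matrix on the extended complex plane, T\<cdot>\<pi>(x) = \<pi>(Tx)\<close>
definition moeb :: "cmat \<Rightarrow> complex option \<Rightarrow> complex option" where
  "moeb A w = (case w of None \<Rightarrow> proj (A *v vector [1, 0])
                        | Some z \<Rightarrow> proj (A *v vector [z, 1]))"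

definition supp_law :: "'s measure \<Rightarrow> ('s \<Rightarrow> cmat) \<Rightarrow> cmat set" where
  "supp_law P X = {A. \<forall>U. open U \<longrightarrow> A \<in> U \<longrightarrow> 0 < emeasure P {s \<in> space P. X s \<in> U}}"

inductive_set semigrp :: "cmat set \<Rightarrow> cmat set" for S where
  gen: "A \<in> S \<Longrightarrow> A \<in> semigrp S"
| mult: "A \<in> semigrp S \<Longrightarrow> B \<in> semigrp S \<Longrightarrow> A ** B \<in> semigrp S"

definition C2_on :: "(real \<times> real) set \<Rightarrow> (real \<times> real \<Rightarrow> cmat) \<Rightarrow> bool" where
  "C2_on U f \<longleftrightarrow> (\<exists>D D2.
      (\<forall>p\<in>U. (f has_derivative blinfun_apply (D p)) (at p)) \<and>
      (\<forall>p\<in>U. (D has_derivative blinfun_apply (D2 p)) (at p)) \<and>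
      continuous_on U D2)"

text \<open>main term of the expansion of log||T x||, as a function of z = \<pi>(x);
  at z = \<infinity> the (continuous) limiting value is used\<close>
definition lemma6_main ::
  "real \<Rightarrow> real \<Rightarrow> complex \<Rightarrow> complex \<Rightarrow> real \<Rightarrow> real \<Rightarrow> complex option \<Rightarrow> real" where
  "lemma6_main eps del beta beta' p3 q3 w =
    (case w of
      Some z \<Rightarrow>
        2 * eps * Re (beta * z) / (1 + (cmod z)^2)
        + eps^2 * (cmod beta)^2 * (1 + (cmod z)^4) / (1 + (cmod z)^2)^2
        + del * q3 * (1 - (cmod z)^2) / (1 + (cmod z)^2)
        + 2 * eps^2 * (Re ((beta' + \<i> * of_real p3 * beta) * z) / (1 + (cmod z)^2)
                       - Re (beta^2 * z^2) / (1 + (cmod z)^2)^2)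
    | None \<Rightarrow> eps^2 * (cmod beta)^2 - del * q3)"

end

theory Submission
  imports Defs
begin

text \<open>
  Since \<open>Rot \<eta>\<close> is unitary, \<open>\<parallel>T x\<parallel> = \<parallel>exp A x\<parallel>\<close> with
  \<open>A = \<epsilon>P + \<epsilon>\<^sup>2P' + i\<delta>Q + E\<close> and \<open>\<parallel>E\<parallel> = O(\<epsilon>\<^sup>3, \<epsilon>\<delta>, \<delta>\<^sup>2)\<close>.
  Giving \<open>\<epsilon>\<close> weight one and \<open>\<delta>\<close> weight two, the second-order expansion of the exponential
  reads \<open>exp A x = x + a + b + w\<close> with \<open>a = \<epsilon>Px\<close> of weight one,
  \<open>b = \<epsilon>\<^sup>2P'x + i\<delta>Qx + \<epsilon>\<^sup>2P\<^sup>2x/2\<close> of weight two and \<open>w\<close> of weight three.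
  For a unit vector \<open>x\<close>, \<open>log \<parallel>x + a + b + w\<parallel> = log (1 + t) / 2\<close> where
  \<open>t = 2\<langle>x,a\<rangle> + 2\<langle>x,b\<rangle> + \<parallel>a\<parallel>\<^sup>2\<close> up to weight three, and
  \<open>log (1 + t) = t - t\<^sup>2/2 + O(t\<^sup>3)\<close> leaves
  \<open>\<langle>x,a\<rangle> + \<langle>x,b\<rangle> + \<parallel>a\<parallel>\<^sup>2/2 - \<langle>x,a\<rangle>\<^sup>2\<close>.
  For \<open>P, P', Q\<close> in su(1,1) these are explicit Hermitian forms in \<open>x\<close>
  (\<open>P\<^sup>2\<close> is a multiple of the identity), and dividing by \<open>|x\<^sub>2|\<^sup>2\<close> expresses them
  through \<open>z = x\<^sub>1/x\<^sub>2\<close>.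
\<close>

lemma norm_matrix_vector_mult_le:
  fixes M :: "'a::real_normed_div_algebra^'n^'m"
  shows "norm (M *v v) \<le> norm M * norm v"
proof -
  have row: "norm ((M *v v) $ i) \<le> norm (M $ i) * norm v" for i
  proof -
    have "norm ((M *v v) $ i) \<le> (\<Sum>j\<in>UNIV. norm (M $ i $ j) * norm (v $ j))"
      unfolding matrix_vector_mult_def vec_lambda_beta
      by (rule order_trans[OF norm_sum]) (simp add: norm_mult)
    also have "\<dots> \<le> norm (M $ i) * norm v"
      using L2_set_mult_ineq[of "\<lambda>j. norm (M $ i $ j)" "\<lambda>j. norm (v $ j)" UNIV]
      by (simp add: norm_vec_def)
    finally show ?thesis .
  qed
  have "norm (M *v v) \<le> L2_set (\<lambda>i. norm (M $ i) * norm v) UNIV"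
    unfolding norm_vec_def[of "M *v v"] by (rule L2_set_mono) (use row in auto)
  also have "\<dots> = norm M * norm v"
    by (simp add: L2_set_left_distrib norm_vec_def[of M])
  finally show ?thesis .
qed

lemma norm_matrix_vector_mult2_le:
  fixes M :: "'a::real_normed_div_algebra^'n^'m" and N :: "'a^'k^'n"
  shows "norm (M *v (N *v v)) \<le> norm M * norm N * norm v"
  using norm_matrix_vector_mult_le[of M "N *v v"] norm_matrix_vector_mult_le[of N v]
  by (simp add: mult.assoc order_trans[OF _ mult_left_mono])

lemma norm_matrix_sq:
  fixes M :: "'a::real_normed_vector^'n^'m"
  shows "norm M ^ 2 = (\<Sum>i\<in>UNIV. \<Sum>j\<in>UNIV. norm (M $ i $ j) ^ 2)"
  by (simp add: norm_vec_def L2_set_def sum_nonneg)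

lemma norm_transpose [simp]:
  fixes M :: "'a::{real_normed_vector,semiring_1}^'n^'m"
  shows "norm (transpose M) = norm M"
proof -
  have "norm (transpose M) ^ 2 = norm M ^ 2"
    unfolding norm_matrix_sq transpose_def vec_lambda_beta by (rule sum.swap)
  then show ?thesis by simp
qed

lemma norm_matrix_matrix_mult_le:
  fixes M :: "'a::real_normed_field^'n^'m" and N :: "'a^'p^'n"
  shows "norm (M ** N) \<le> norm M * norm N"
proof -
  have row: "norm ((M ** N) $ i) \<le> norm (M $ i) * norm N" for i
  proof -
    have "(M ** N) $ i = transpose N *v (M $ i)"
      by (simp add: vec_eq_iff matrix_matrix_mult_def matrix_vector_mult_def transpose_def mult.commute
          del: transpose_matrix_vector)
    then show ?thesis
      using norm_matrix_vector_mult_le[of "transpose N" "M $ i"] by (simp only: norm_transpose mult.commute)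
  qed
  have "norm (M ** N) \<le> L2_set (\<lambda>i. norm (M $ i) * norm N) UNIV"
    unfolding norm_vec_def[of "M ** N"] by (rule L2_set_mono) (use row in auto)
  also have "\<dots> = norm M * norm N"
    by (simp add: L2_set_left_distrib norm_vec_def[of M])
  finally show ?thesis .
qed

lemma scaleR_matrix_vector_assoc:
  fixes A :: "'a::real_algebra_1^'n^'m"
  shows "(c *\<^sub>R A) *v x = c *\<^sub>R (A *v x)"
  by (simp add: vec_eq_iff matrix_vector_mult_def scaleR_sum_right)

lemma matrix_vector_mult_scaleR_right:
  fixes A :: "'a::real_algebra_1^'n^'m"
  shows "A *v (c *\<^sub>R x) = c *\<^sub>R (A *v x)"
  using linear_scale[OF matrix_vector_mul_linear] .

lemma norm_triangle_ineq3: "norm (u + v + w) \<le> norm u + norm v + norm w"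
  using norm_triangle_ineq[of "u + v" w] norm_triangle_ineq[of u v] by linarith

lemma mk2_nth [simp]:
  "mk2 a b c d $ 1 $ 1 = a" "mk2 a b c d $ 1 $ 2 = b" "mk2 a b c d $ 2 $ 1 = c" "mk2 a b c d $ 2 $ 2 = d"
  by (simp_all add: mk2_def)

lemma cmat_mult_vec_nth [simp]: "((M::cmat) *v v) $ i = M $ i $ 1 * v $ 1 + M $ i $ 2 * v $ 2"
  by (simp add: matrix_vector_mult_def sum_2)

lemma inner_cvec: "inner (x::cvec) y = Re (x $ 1 * cnj (y $ 1)) + Re (x $ 2 * cnj (y $ 2))"
  by (simp add: inner_vec_def sum_2 inner_complex_def)

lemma norm_cvec_sq: "(norm (v::cvec))\<^sup>2 = (cmod (v $ 1))\<^sup>2 + (cmod (v $ 2))\<^sup>2"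
  by (simp add: norm_vec_def L2_set_def sum_2)

lemma norm_cscale: "norm (cscale c (M::cmat)) = cmod c * norm M"
proof -
  have row: "norm (cscale c M $ i) = cmod c * norm (M $ i)" for i
    by (simp add: cscale_def norm_vec_def norm_mult L2_set_right_distrib)
  show ?thesis
    unfolding norm_vec_def[of "cscale c M"] norm_vec_def[of M] row
    by (simp add: L2_set_right_distrib)
qed

lemma norm_Rot_mult_vec [simp]: "norm (Rot t *v v) = norm v"
proof -
  have "(norm (Rot t *v v))\<^sup>2 = (norm v)\<^sup>2"
    by (simp add: norm_cvec_sq Rot_def norm_mult)
  then show ?thesis by simp
qed

text \<open>The gauge \<open>O(\<epsilon>\<^sup>3, \<epsilon>\<delta>, \<delta>\<^sup>2)\<close>: it dominates every monomial of weight at least three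
  when \<open>a\<close> has weight one and \<open>b\<close> weight two.\<close>

definition third_order :: "real \<Rightarrow> real \<Rightarrow> real" where
  "third_order a b = \<bar>a\<bar> ^ 3 + \<bar>a\<bar> * \<bar>b\<bar> + b\<^sup>2"

lemma third_order_nonneg: "0 \<le> third_order a b"
  by (simp add: third_order_def)

lemma power3_add_le_third_order:
  fixes a b :: real
  assumes "0 \<le> a" "a \<le> 1/4" "0 \<le> b" "b \<le> 1/4"
  shows "(a + b) ^ 3 \<le> 2 * third_order a b"
proof -
  have "a * (a * b) \<le> 1/4 * (a * b)" "b * (a * b) \<le> 1/4 * (a * b)" "b * b\<^sup>2 \<le> 1/4 * b\<^sup>2"
    using assms by (intro mult_right_mono; simp)+
  moreover have "(a + b) ^ 3 = a ^ 3 + 3 * (a * (a * b)) + 3 * (b * (a * b)) + b * b\<^sup>2"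
    by (simp add: power2_eq_square power3_eq_cube algebra_simps)
  moreover have "third_order a b = a ^ 3 + a * b + b\<^sup>2" "0 \<le> a ^ 3" "0 \<le> a * b" "0 \<le> b\<^sup>2"
    using assms by (simp_all add: third_order_def)
  ultimately show ?thesis
    by linarith
qed

lemma third_order_le_weighted:
  fixes x y a b c1 c2 :: real
  assumes x: "\<bar>x\<bar> \<le> c1 * \<bar>a\<bar>" and y: "\<bar>y\<bar> \<le> c2 * (a\<^sup>2 + \<bar>b\<bar>)"
    and a: "\<bar>a\<bar> \<le> 1" and c: "0 \<le> c1" "0 \<le> c2"
  shows "third_order x y \<le> (c1 ^ 3 + c1 * c2 + 2 * c2\<^sup>2) * third_order a b"
proof -
  define T where "T = third_order a b"
  have T: "\<bar>a\<bar> ^ 3 \<le> T" "\<bar>a\<bar> ^ 3 + \<bar>a\<bar> * \<bar>b\<bar> \<le> T" "0 \<le> T"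
    by (simp_all add: T_def third_order_def)
  have "(a\<^sup>2 + \<bar>b\<bar>)\<^sup>2 = \<bar>a\<bar> * \<bar>a\<bar> ^ 3 + 2 * \<bar>a\<bar> * (\<bar>a\<bar> * \<bar>b\<bar>) + b\<^sup>2"
    by (simp add: power2_eq_square power3_eq_cube algebra_simps)
  also have "\<dots> \<le> 1 * \<bar>a\<bar> ^ 3 + 2 * 1 * (\<bar>a\<bar> * \<bar>b\<bar>) + b\<^sup>2"
    using a by (intro add_mono mult_right_mono mult_left_mono) auto
  also have "\<dots> \<le> 2 * T"
    by (simp add: T_def third_order_def)
  finally have square: "(a\<^sup>2 + \<bar>b\<bar>)\<^sup>2 \<le> 2 * T" .
  have "\<bar>x\<bar> ^ 3 \<le> c1 ^ 3 * \<bar>a\<bar> ^ 3"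
    using power_mono[OF x, of 3] by (simp add: power_mult_distrib)
  moreover have "\<bar>x\<bar> * \<bar>y\<bar> \<le> c1 * c2 * (\<bar>a\<bar> ^ 3 + \<bar>a\<bar> * \<bar>b\<bar>)"
    using mult_mono[OF x y] c by (simp add: power2_eq_square power3_eq_cube algebra_simps)
  moreover have "y\<^sup>2 \<le> c2\<^sup>2 * (2 * T)"
    using power_mono[OF y, of 2] mult_left_mono[OF square, of "c2\<^sup>2"]
    by (simp add: power_mult_distrib)
  moreover have "c1 ^ 3 * \<bar>a\<bar> ^ 3 \<le> c1 ^ 3 * T" "c1 * c2 * (\<bar>a\<bar> ^ 3 + \<bar>a\<bar> * \<bar>b\<bar>) \<le> c1 * c2 * T"
    using T c by (simp_all add: mult_left_mono)
  ultimately show ?thesis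
    by (simp add: T_def[symmetric] third_order_def[of x y] algebra_simps)
qed

lemma third_order_le_second_order:
  assumes e: "\<bar>e\<bar> \<le> 1" and d: "\<bar>d\<bar> \<le> 1"
  shows "third_order e d \<le> 2 * (e\<^sup>2 + \<bar>d\<bar>)"
proof -
  have "\<bar>e\<bar> ^ 3 \<le> \<bar>e\<bar>\<^sup>2" "\<bar>d\<bar>\<^sup>2 \<le> \<bar>d\<bar> ^ 1"
    using e d by (intro power_decreasing; simp)+
  then have "\<bar>e\<bar> ^ 3 \<le> e\<^sup>2" "d\<^sup>2 \<le> \<bar>d\<bar>"
    by simp_all
  moreover have "\<bar>e\<bar> * \<bar>d\<bar> \<le> \<bar>d\<bar>"
    using e by (simp add: mult_left_le_one_le)
  ultimately show ?thesis
    unfolding third_order_def using zero_le_power2[of e] by (smt (verit))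
qed

section \<open>Second-order expansion of the matrix exponential\<close>

lemma norm_mpow_le: "0 < n \<Longrightarrow> norm (mpow A n) \<le> norm A ^ n"
proof (induction n)
  case 0
  then show ?case by simp
next
  case (Suc n)
  show ?case
  proof (cases "n = 0")
    case True
    then show ?thesis by simp
  next
    case False
    have "norm (mpow A (Suc n)) \<le> norm A * norm (mpow A n)"
      by (simp add: norm_matrix_matrix_mult_le)
    also have "\<dots> \<le> norm A * norm A ^ n"
      using Suc.IH False by (simp add: mult_left_mono)
    finally show ?thesis by simp
  qed
qed

lemma norm_mexp_second_order_remainder:
  assumes small: "norm A \<le> 1/2"
  shows "norm (mexp A - (mat 1 + A + (1/2) *\<^sub>R (A ** A))) \<le> 2 * norm A ^ 3"
proof -
  define f where "f n = (1 / fact n) *\<^sub>R mpow A n" for n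
  have f_le: "norm (f n) \<le> norm A ^ n" if "0 < n" for n
  proof -
    have "norm (f n) \<le> norm (mpow A n)"
      using divide_left_mono[of 1 "fact n" "norm (mpow A n)"] by (simp add: f_def)
    also have "\<dots> \<le> norm A ^ n" using norm_mpow_le[OF that] .
    finally show ?thesis .
  qed
  have "summable (\<lambda>n. norm A ^ Suc n)"
    using small by (simp add: summable_geometric)
  then have "summable (\<lambda>n. f (Suc n))"
    by (rule summable_comparison_test') (rule f_le, simp)
  then have f_summable: "summable f"
    by (simp only: summable_Suc_iff)
  have tail_le: "norm (f (n + 3)) \<le> norm A ^ 3 * (1/2) ^ n" for n
  proof -
    have "norm (f (n + 3)) \<le> norm A ^ 3 * norm A ^ n"
      using f_le[of "n + 3"] by (simp add: power_add mult.commute)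
    also have "\<dots> \<le> norm A ^ 3 * (1/2) ^ n"
      using small by (intro mult_left_mono power_mono) auto
    finally show ?thesis .
  qed
  have "mexp A = (\<Sum>n. f (n + 3)) + (\<Sum>i<3. f i)"
    unfolding mexp_def f_def[symmetric] by (rule suminf_split_initial_segment[OF f_summable])
  moreover have "(\<Sum>i<3. f i) = mat 1 + A + (1/2) *\<^sub>R (A ** A)"
    by (simp add: f_def eval_nat_numeral)
  ultimately have "mexp A - (mat 1 + A + (1/2) *\<^sub>R (A ** A)) = (\<Sum>n. f (n + 3))"
    by simp
  also have "norm \<dots> \<le> (\<Sum>n. norm A ^ 3 * (1/2::real) ^ n)"
    by (rule norm_suminf_le[OF tail_le]) (simp add: summable_geometric)
  also have "\<dots> = 2 * norm A ^ 3"
    by (subst suminf_mult) (auto simp: summable_geometric suminf_geometric)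
  finally show ?thesis .
qed

lemma mexp_add_mult_vec_second_order:
  fixes A B :: cmat
  assumes A: "norm A \<le> 1/4" and B: "norm B \<le> 1/4"
  shows "norm (mexp (A + B) *v x - (x + A *v x + B *v x + (1/2) *\<^sub>R (A *v (A *v x))))
           \<le> 5 * third_order (norm A) (norm B) * norm x"
proof -
  define R where "R = mexp (A + B) - (mat 1 + (A + B) + (1/2) *\<^sub>R ((A + B) ** (A + B)))"
  define y where "y = A *v (B *v x) + B *v (A *v x) + B *v (B *v x)"
  have "mexp (A + B) *v x - (x + A *v x + B *v x + (1/2) *\<^sub>R (A *v (A *v x))) = R *v x + (1/2) *\<^sub>R y"
    by (simp add: R_def y_def algebra_simps scaleR_matrix_vector_assoc flip: matrix_vector_mul_assoc)
  also have "norm \<dots> \<le> norm R * norm x + (1/2) * norm y"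
    by (rule order_trans[OF norm_triangle_ineq]) (simp add: norm_matrix_vector_mult_le)
  also have "\<dots> \<le> 5 * third_order (norm A) (norm B) * norm x"
  proof -
    have "norm (A + B) \<le> 1/2"
      using norm_triangle_ineq[of A B] A B by linarith
    then have "norm R \<le> 2 * norm (A + B) ^ 3"
      unfolding R_def by (rule norm_mexp_second_order_remainder)
    also have "\<dots> \<le> 2 * (norm A + norm B) ^ 3"
      by (simp add: norm_triangle_ineq power_mono)
    also have "\<dots> \<le> 4 * third_order (norm A) (norm B)"
      using power3_add_le_third_order[OF norm_ge_zero A norm_ge_zero B] by simp
    finally have R_le: "norm R \<le> 4 * third_order (norm A) (norm B)" .
    have "norm y \<le> norm (A *v (B *v x)) + norm (B *v (A *v x)) + norm (B *v (B *v x))"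
      unfolding y_def by (rule norm_triangle_ineq3)
    also have "\<dots> \<le> (2 * norm A * norm B + norm B ^ 2) * norm x"
      using norm_matrix_vector_mult2_le[of A B x] norm_matrix_vector_mult2_le[of B A x]
        norm_matrix_vector_mult2_le[of B B x]
      by (simp add: power2_eq_square algebra_simps)
    also have "\<dots> \<le> 2 * third_order (norm A) (norm B) * norm x"
      by (intro mult_right_mono) (auto simp: third_order_def)
    finally have "norm y \<le> 2 * third_order (norm A) (norm B) * norm x" .
    moreover have "norm R * norm x \<le> 4 * third_order (norm A) (norm B) * norm x"
      using R_le by (rule mult_right_mono) simp
    ultimately show ?thesis
      by linarith
  qed
  finally show ?thesis .
qed

lemma mexp_perturbation_mult_vec:
  fixes P P' Q E :: cmat and x :: cvec and e d :: real
  defines "A \<equiv> e *\<^sub>R P" and "B \<equiv> e\<^sup>2 *\<^sub>R P' + cscale (\<i> * of_real d) Q + E"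
    and "a \<equiv> e *\<^sub>R (P *v x)"
    and "b \<equiv> e\<^sup>2 *\<^sub>R (P' *v x) + cscale (\<i> * of_real d) Q *v x + (e\<^sup>2 / 2) *\<^sub>R (P *v (P *v x))"
  assumes x: "norm x = 1" and small: "norm A \<le> 1/4" "norm B \<le> 1/4"
  shows "norm (mexp (A + B) *v x - (x + a + b)) \<le> 5 * third_order (norm A) (norm B) + norm E"
proof -
  have "x + a + b = (x + A *v x + B *v x + (1/2) *\<^sub>R (A *v (A *v x))) - E *v x"
    by (simp add: A_def B_def a_def b_def scaleR_matrix_vector_assoc matrix_vector_mult_scaleR_right
        matrix_vector_mult_add_rdistrib power2_eq_square algebra_simps)
  then have "mexp (A + B) *v x - (x + a + b)
      = (mexp (A + B) *v x - (x + A *v x + B *v x + (1/2) *\<^sub>R (A *v (A *v x)))) + E *v x"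
    by (simp add: algebra_simps)
  also have "norm \<dots> \<le> 5 * third_order (norm A) (norm B) * norm x + norm E * norm x"
    using mexp_add_mult_vec_second_order[OF small, of x] norm_matrix_vector_mult_le[of E x]
    by (rule order_trans[OF norm_triangle_ineq add_mono])
  finally show ?thesis
    using x by simp
qed

lemma mexp_perturbation_terms_le:
  fixes P P' Q :: cmat and x :: cvec and e d L :: real
  assumes P: "norm P \<le> L" "norm P' \<le> L" "norm Q \<le> L" and x: "norm x = 1"
  shows "norm (e *\<^sub>R (P *v x)) \<le> L * \<bar>e\<bar>"
    and "norm (e\<^sup>2 *\<^sub>R (P' *v x) + cscale (\<i> * of_real d) Q *v x + (e\<^sup>2 / 2) *\<^sub>R (P *v (P *v x)))
           \<le> (L + L\<^sup>2) * (e\<^sup>2 + \<bar>d\<bar>)"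
proof -
  have L: "0 \<le> L" using P(1) norm_ge_zero order_trans by blast
  have mv: "norm (M *v x) \<le> L" if "norm M \<le> L" for M :: cmat
    using norm_matrix_vector_mult_le[of M x] that x by simp
  show "norm (e *\<^sub>R (P *v x)) \<le> L * \<bar>e\<bar>"
    using mult_left_mono[OF mv[OF P(1)] abs_ge_zero[of e]] by (simp add: mult.commute)
  have "norm (e\<^sup>2 *\<^sub>R (P' *v x)) \<le> e\<^sup>2 * L"
    using mult_left_mono[OF mv[OF P(2)] zero_le_power2[of e]] by simp
  moreover have "norm (cscale (\<i> * of_real d) Q *v x) \<le> \<bar>d\<bar> * L"
    using mult_left_mono[OF P(3) abs_ge_zero[of d]] norm_matrix_vector_mult_le[of "cscale (\<i> * of_real d) Q" x] x
    by (simp add: norm_cscale norm_mult)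
  moreover have "norm ((e\<^sup>2 / 2) *\<^sub>R (P *v (P *v x))) \<le> e\<^sup>2 / 2 * L\<^sup>2"
    using norm_matrix_vector_mult2_le[of P P x] mult_mono[OF P(1) P(1)] x L
    by (simp add: power2_eq_square mult_left_mono)
  ultimately have "norm (e\<^sup>2 *\<^sub>R (P' *v x) + cscale (\<i> * of_real d) Q *v x + (e\<^sup>2 / 2) *\<^sub>R (P *v (P *v x)))
      \<le> e\<^sup>2 * L + \<bar>d\<bar> * L + e\<^sup>2 / 2 * L\<^sup>2"
    using norm_triangle_ineq3[of "e\<^sup>2 *\<^sub>R (P' *v x)" "cscale (\<i> * of_real d) Q *v x"
        "(e\<^sup>2 / 2) *\<^sub>R (P *v (P *v x))"]
    by linarith
  also have "\<dots> \<le> (L + L\<^sup>2) * (e\<^sup>2 + \<bar>d\<bar>)"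
    using L by (simp add: algebra_simps mult_left_mono)
  finally show "norm (e\<^sup>2 *\<^sub>R (P' *v x) + cscale (\<i> * of_real d) Q *v x + (e\<^sup>2 / 2) *\<^sub>R (P *v (P *v x)))
      \<le> (L + L\<^sup>2) * (e\<^sup>2 + \<bar>d\<bar>)" .
qed

lemma mexp_perturbation_remainder_le:
  fixes P P' Q E :: cmat and x :: cvec and e d L C0 :: real
  defines "a \<equiv> e *\<^sub>R (P *v x)"
    and "b \<equiv> e\<^sup>2 *\<^sub>R (P' *v x) + cscale (\<i> * of_real d) Q *v x + (e\<^sup>2 / 2) *\<^sub>R (P *v (P *v x))"
  assumes P: "norm P \<le> L" "norm P' \<le> L" "norm Q \<le> L" and E: "norm E \<le> C0 * third_order e d"
    and x: "norm x = 1" and ed: "\<bar>e\<bar> \<le> 1" "\<bar>d\<bar> \<le> 1" and C0: "0 \<le> C0"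
    and small: "L * \<bar>e\<bar> \<le> 1/4" "(L + 2 * C0) * (e\<^sup>2 + \<bar>d\<bar>) \<le> 1/4"
  shows "norm (mexp (e *\<^sub>R P + e\<^sup>2 *\<^sub>R P' + cscale (\<i> * of_real d) Q + E) *v x - (x + a + b))
           \<le> (5 * (L ^ 3 + L * (L + 2 * C0) + 2 * (L + 2 * C0)\<^sup>2) + C0) * third_order e d"
proof -
  have L: "0 \<le> L" using P(1) norm_ge_zero order_trans by blast
  have nA: "norm (e *\<^sub>R P) \<le> L * \<bar>e\<bar>"
    using mult_left_mono[OF P(1) abs_ge_zero[of e]] by (simp add: mult.commute)
  have "norm (e\<^sup>2 *\<^sub>R P') \<le> e\<^sup>2 * L" "norm (cscale (\<i> * of_real d) Q) \<le> \<bar>d\<bar> * L"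
    using mult_left_mono[OF P(2) zero_le_power2[of e]] mult_left_mono[OF P(3) abs_ge_zero[of d]]
    by (simp_all add: norm_cscale norm_mult)
  then have "norm (e\<^sup>2 *\<^sub>R P' + cscale (\<i> * of_real d) Q + E) \<le> e\<^sup>2 * L + \<bar>d\<bar> * L + C0 * third_order e d"
    using E norm_triangle_ineq3[of "e\<^sup>2 *\<^sub>R P'" "cscale (\<i> * of_real d) Q" E] by linarith
  also have "\<dots> \<le> (L + 2 * C0) * (e\<^sup>2 + \<bar>d\<bar>)"
    using mult_left_mono[OF third_order_le_second_order[OF ed] C0] by (simp add: algebra_simps)
  finally have nB: "norm (e\<^sup>2 *\<^sub>R P' + cscale (\<i> * of_real d) Q + E) \<le> (L + 2 * C0) * (e\<^sup>2 + \<bar>d\<bar>)" .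
  have "third_order (norm (e *\<^sub>R P)) (norm (e\<^sup>2 *\<^sub>R P' + cscale (\<i> * of_real d) Q + E))
      \<le> (L ^ 3 + L * (L + 2 * C0) + 2 * (L + 2 * C0)\<^sup>2) * third_order e d"
    using nA nB ed L C0 by (intro third_order_le_weighted) auto
  moreover have "norm (mexp (e *\<^sub>R P + e\<^sup>2 *\<^sub>R P' + cscale (\<i> * of_real d) Q + E) *v x - (x + a + b))
      \<le> 5 * third_order (norm (e *\<^sub>R P)) (norm (e\<^sup>2 *\<^sub>R P' + cscale (\<i> * of_real d) Q + E)) + norm E"
    using mexp_perturbation_mult_vec[OF x] nA nB small unfolding a_def b_def
    by (simp add: add.assoc)
  ultimately show ?thesis
    using E by (simp add: algebra_simps)
qed

section \<open>Logarithm of the norm of a perturbed unit vector\<close>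

lemma abs_ln_one_plus_x_second_order_bound:
  fixes x :: real
  assumes x: "\<bar>x\<bar> \<le> 1/2"
  shows "\<bar>ln (1 + x) - (x - x\<^sup>2 / 2)\<bar> \<le> 2 * \<bar>x\<bar> ^ 3"
proof -
  define f where "f u = ln (1 + u) - (u - u\<^sup>2 / 2)" for u :: real
  have f': "DERIV f u :> u\<^sup>2 / (1 + u)" if "-1/2 \<le> u" for u
  proof -
    have "DERIV f u :> 1 / (1 + u) - (1 - 2 * u / 2)"
      unfolding f_def using that by (auto intro!: derivative_eq_intros)
    also have "1 / (1 + u) - (1 - 2 * u / 2) = u\<^sup>2 / (1 + u)"
      using that by (simp add: field_simps power2_eq_square)
    finally show ?thesis .
  qed
  obtain z where z: "\<bar>z\<bar> \<le> \<bar>x\<bar>" "f x = x * (z\<^sup>2 / (1 + z))"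
  proof (cases "x < 0")
    case True
    then obtain z where "x < z" "z < 0" "f 0 - f x = (0 - x) * (z\<^sup>2 / (1 + z))"
      using MVT2[of x 0 f "\<lambda>u. u\<^sup>2 / (1 + u)"] f' x by auto
    then show ?thesis
      by (intro that[of z]) (auto simp: f_def)
  next
    case False
    show ?thesis
    proof (cases "x = 0")
      case True
      then show ?thesis by (intro that[of 0]) (simp_all add: f_def)
    next
      case False
      with \<open>\<not> x < 0\<close> obtain z where "0 < z" "z < x" "f x - f 0 = (x - 0) * (z\<^sup>2 / (1 + z))"
        using MVT2[of 0 x f "\<lambda>u. u\<^sup>2 / (1 + u)"] f' x by auto
      then show ?thesis
        by (intro that[of z]) (auto simp: f_def)
    qed
  qed
  have "\<bar>z\<^sup>2 / (1 + z)\<bar> \<le> 2 * x\<^sup>2"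
  proof -
    have pos: "1/2 \<le> 1 + z" using z(1) x by linarith
    then have "\<bar>z\<^sup>2 / (1 + z)\<bar> = z\<^sup>2 / (1 + z)" by simp
    also have "\<dots> \<le> z\<^sup>2 / (1/2)"
      using pos by (intro divide_left_mono) auto
    also have "\<dots> \<le> 2 * x\<^sup>2"
      using z(1) by (simp add: abs_le_square_iff)
    finally show ?thesis .
  qed
  then have "\<bar>f x\<bar> \<le> \<bar>x\<bar> * (2 * x\<^sup>2)"
    unfolding z(2) abs_mult by (intro mult_left_mono) auto
  then show ?thesis
    by (simp add: f_def power2_eq_square power3_eq_cube)
qed

lemma abs_ln_one_plus_add_second_order_bound:
  fixes s u a b :: real
  assumes s: "\<bar>s\<bar> \<le> a" and u: "\<bar>u\<bar> \<le> b" and small: "a \<le> 1/4" "b \<le> 1/4"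
  shows "\<bar>ln (1 + (s + u)) - (s + u - s\<^sup>2 / 2)\<bar> \<le> 5 * third_order a b"
proof -
  have a: "0 \<le> a" and b: "0 \<le> b" using s u by linarith+
  have su: "\<bar>s + u\<bar> \<le> a + b" using s u by linarith
  then have "\<bar>ln (1 + (s + u)) - (s + u - (s + u)\<^sup>2 / 2)\<bar> \<le> 2 * \<bar>s + u\<bar> ^ 3"
    using small by (intro abs_ln_one_plus_x_second_order_bound) linarith
  also have "\<dots> \<le> 2 * (a + b) ^ 3"
    using su by (simp add: power_mono)
  also have "\<dots> \<le> 4 * third_order a b"
    using power3_add_le_third_order[OF a small(1) b small(2)] by simp
  finally have taylor: "\<bar>ln (1 + (s + u)) - (s + u - (s + u)\<^sup>2 / 2)\<bar> \<le> 4 * third_order a b" .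
  have "\<bar>(s + u)\<^sup>2 - s\<^sup>2\<bar> = \<bar>u\<bar> * \<bar>2 * s + u\<bar>"
    by (simp add: power2_eq_square algebra_simps flip: abs_mult)
  also have "\<dots> \<le> b * (2 * a + b)"
    using s u b by (intro mult_mono) auto
  also have "\<dots> \<le> 2 * third_order a b"
    using a b by (simp add: third_order_def power2_eq_square algebra_simps)
  finally have "\<bar>(s + u)\<^sup>2 - s\<^sup>2\<bar> \<le> 2 * third_order a b" .
  with taylor show ?thesis
    by (simp add: abs_le_iff)
qed

text \<open>Second-order expansion of \<open>log \<parallel>x + a + b\<parallel>\<close> for a unit vector \<open>x\<close>, with \<open>a\<close> of first
  and \<open>b\<close> of second order.\<close>

definition log_norm_approx :: "'a::real_inner \<Rightarrow> 'a \<Rightarrow> 'a \<Rightarrow> real" where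
  "log_norm_approx x a b = inner x a + inner x b + (norm a)\<^sup>2 / 2 - (inner x a)\<^sup>2"

lemma half_ln_one_plus_second_order_bound:
  fixes s v \<rho> \<alpha> \<beta> \<gamma> :: real
  assumes s: "\<bar>s\<bar> \<le> 2 * \<alpha>" and v: "\<bar>v\<bar> \<le> 2 * \<beta> + \<alpha>\<^sup>2"
    and \<rho>: "\<bar>\<rho>\<bar> \<le> 2 * (\<alpha> * \<beta>) + \<beta>\<^sup>2 + 3 * \<gamma>"
    and nonneg: "0 \<le> \<beta>" "0 \<le> \<gamma>" and small: "\<alpha> \<le> 1/32" "\<beta> \<le> 1/32" "\<gamma> \<le> 1/32"
  shows "\<bar>ln (1 + (s + v + \<rho>)) / 2 - (s + v - s\<^sup>2 / 2) / 2\<bar> \<le> 82 * (third_order \<alpha> \<beta> + \<gamma>)"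
proof -
  have \<alpha>: "0 \<le> \<alpha>" using s by linarith
  have "(2 * \<alpha> + \<beta>) * \<beta> \<le> 1 * \<beta>"
    using small \<alpha> nonneg by (intro mult_right_mono) auto
  then have "2 * (\<alpha> * \<beta>) + \<beta>\<^sup>2 \<le> \<beta>"
    by (simp add: power2_eq_square algebra_simps)
  then have u: "\<bar>v + \<rho>\<bar> \<le> 3 * \<beta> + \<alpha>\<^sup>2 + 3 * \<gamma>"
    using v \<rho> by linarith
  have "\<alpha>\<^sup>2 \<le> 1/1024"
    using power_mono[OF small(1) \<alpha>, of 2] by (simp add: power_divide)
  then have "\<bar>ln (1 + (s + (v + \<rho>))) - (s + (v + \<rho>) - s\<^sup>2 / 2)\<bar>
      \<le> 5 * third_order (2 * \<alpha>) (3 * \<beta> + \<alpha>\<^sup>2 + 3 * \<gamma>)"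
    using small by (intro abs_ln_one_plus_add_second_order_bound[OF s u]) auto
  also have "third_order (2 * \<alpha>) (3 * \<beta> + \<alpha>\<^sup>2 + 3 * \<gamma>) \<le> (2 ^ 3 + 2 * 3 + 2 * 3\<^sup>2) * third_order \<alpha> (\<beta> + \<gamma>)"
    using \<alpha> nonneg small by (intro third_order_le_weighted) auto
  also have "third_order \<alpha> (\<beta> + \<gamma>) \<le> third_order \<alpha> \<beta> + \<gamma>"
  proof -
    have "(\<alpha> + 2 * \<beta> + \<gamma>) * \<gamma> \<le> 1 * \<gamma>"
      using small \<alpha> nonneg by (intro mult_right_mono) auto
    then show ?thesis
      using \<alpha> nonneg by (simp add: third_order_def power2_eq_square algebra_simps)
  qed
  finally have taylor: "\<bar>ln (1 + (s + v + \<rho>)) - (s + v + \<rho> - s\<^sup>2 / 2)\<bar> \<le> 160 * (third_order \<alpha> \<beta> + \<gamma>)"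
    by (simp add: add.assoc)
  have "third_order \<alpha> \<beta> = \<alpha> ^ 3 + \<alpha> * \<beta> + \<beta>\<^sup>2"
    using \<alpha> nonneg by (simp add: third_order_def)
  then have \<rho>': "\<bar>\<rho>\<bar> \<le> 3 * (third_order \<alpha> \<beta> + \<gamma>)"
    using \<rho> mult_nonneg_nonneg[OF \<alpha> nonneg(1)] zero_le_power[OF \<alpha>, of 3] zero_le_power2[of \<beta>]
    by (smt (verit))
  have "\<bar>ln (1 + (s + v + \<rho>)) / 2 - (s + v - s\<^sup>2 / 2) / 2\<bar>
      = \<bar>(ln (1 + (s + v + \<rho>)) - (s + v + \<rho> - s\<^sup>2 / 2)) + \<rho>\<bar> / 2"
    by (simp add: field_simps)
  also have "\<dots> \<le> (160 * (third_order \<alpha> \<beta> + \<gamma>) + 3 * (third_order \<alpha> \<beta> + \<gamma>)) / 2"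
    using abs_triangle_ineq taylor \<rho>' by (intro divide_right_mono) (smt (verit), simp)
  also have "\<dots> \<le> 82 * (third_order \<alpha> \<beta> + \<gamma>)"
    using third_order_nonneg[of \<alpha> \<beta>] nonneg by simp
  finally show ?thesis .
qed

lemma ln_norm_unit_perturbation:
  fixes x a b w :: "'a::real_inner" and \<alpha> \<beta> \<gamma> :: real
  assumes x: "norm x = 1" and a: "norm a \<le> \<alpha>" and b: "norm b \<le> \<beta>" and w: "norm w \<le> \<gamma>"
    and small: "\<alpha> \<le> 1/32" "\<beta> \<le> 1/32" "\<gamma> \<le> 1/32"
  shows "\<bar>ln (norm (x + a + b + w)) - log_norm_approx x a b\<bar> \<le> 82 * (third_order \<alpha> \<beta> + \<gamma>)"
proof -
  have nonneg: "0 \<le> \<alpha>" "0 \<le> \<beta>" "0 \<le> \<gamma>"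
    using a b w norm_ge_zero order_trans by blast+
  define s where "s = 2 * inner x a"
  define v where "v = 2 * inner x b + (norm a)\<^sup>2"
  define p where "p = inner a b"
  define q where "q = inner (x + a + b) w"
  define \<rho> where "\<rho> = 2 * p + (norm b)\<^sup>2 + 2 * q + (norm w)\<^sup>2"
  have "inner x x = 1"
    using x by (simp add: norm_eq_1)
  then have square: "(norm (x + a + b + w))\<^sup>2 = 1 + (s + v + \<rho>)"
    by (simp add: s_def v_def \<rho>_def p_def q_def power2_norm_eq_inner inner_add_left inner_add_right
        inner_commute algebra_simps)
  have s_le: "\<bar>s\<bar> \<le> 2 * \<alpha>"
    using Cauchy_Schwarz_ineq2[of x a] x a by (simp add: s_def abs_mult)
  have "\<bar>inner x b\<bar> \<le> \<beta>" "(norm a)\<^sup>2 \<le> \<alpha>\<^sup>2"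
    using Cauchy_Schwarz_ineq2[of x b] x b power_mono[OF a norm_ge_zero, of 2] by simp_all
  then have v_le: "\<bar>v\<bar> \<le> 2 * \<beta> + \<alpha>\<^sup>2"
    unfolding v_def using zero_le_power2[of "norm a"] by linarith
  have "\<bar>p\<bar> \<le> \<alpha> * \<beta>"
    using Cauchy_Schwarz_ineq2[of a b] mult_mono[OF a b] nonneg by (simp add: p_def)
  moreover have "(norm b)\<^sup>2 \<le> \<beta>\<^sup>2" "(norm w)\<^sup>2 \<le> \<gamma> / 32"
    using power_mono[OF b, of 2] power_mono[OF w, of 2] mult_right_mono[OF small(3) nonneg(3)]
    by (simp_all add: power2_eq_square)
  moreover have "\<bar>q\<bar> \<le> 17/16 * \<gamma>"
  proof -
    have "norm (x + a + b) \<le> 17/16"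
      using norm_triangle_ineq[of "x + a" b] norm_triangle_ineq[of x a] x a b small by linarith
    then have "norm (x + a + b) * norm w \<le> 17/16 * \<gamma>"
      using w by (intro mult_mono) auto
    then show ?thesis
      using Cauchy_Schwarz_ineq2[of "x + a + b" w] by (simp add: q_def)
  qed
  ultimately have \<rho>_le: "\<bar>\<rho>\<bar> \<le> 2 * (\<alpha> * \<beta>) + \<beta>\<^sup>2 + 3 * \<gamma>"
    unfolding \<rho>_def using nonneg(3) zero_le_power2[of "norm b"] zero_le_power2[of "norm w"] by linarith
  have "ln (norm (x + a + b + w)) = ln ((norm (x + a + b + w))\<^sup>2) / 2"
    \<comment> \<open>also when the norm vanishes, as \<open>ln 0 = 0\<close>\<close>
    by (cases "norm (x + a + b + w) = 0") (simp_all add: ln_realpow)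
  then have "ln (norm (x + a + b + w)) = ln (1 + (s + v + \<rho>)) / 2"
    by (simp only: square)
  moreover have "log_norm_approx x a b = (s + v - s\<^sup>2 / 2) / 2"
    by (simp add: log_norm_approx_def s_def v_def power2_eq_square)
  ultimately show ?thesis
    using half_ln_one_plus_second_order_bound[OF s_le v_le \<rho>_le nonneg(2,3) small] by (simp only:)
qed

definition log_norm_mexp_approx :: "cmat \<Rightarrow> cmat \<Rightarrow> cmat \<Rightarrow> real \<Rightarrow> real \<Rightarrow> cvec \<Rightarrow> real" where
  "log_norm_mexp_approx P P' Q e d x = log_norm_approx x (e *\<^sub>R (P *v x))
     (e\<^sup>2 *\<^sub>R (P' *v x) + cscale (\<i> * of_real d) Q *v x + (e\<^sup>2 / 2) *\<^sub>R (P *v (P *v x)))"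

lemma ln_norm_mexp_second_order_bound:
  fixes P P' Q E :: cmat and x :: cvec and e d L C0 :: real
  defines "cw \<equiv> 5 * (L ^ 3 + L * (L + 2 * C0) + 2 * (L + 2 * C0)\<^sup>2) + C0"
  assumes P: "norm P \<le> L" "norm P' \<le> L" "norm Q \<le> L" and E: "norm E \<le> C0 * third_order e d"
    and x: "norm x = 1" and ed: "\<bar>e\<bar> \<le> 1" "\<bar>d\<bar> \<le> 1" and C0: "0 \<le> C0"
    and small: "L * \<bar>e\<bar> \<le> 1/32" "(L + L\<^sup>2 + 2 * C0) * (e\<^sup>2 + \<bar>d\<bar>) \<le> 1/32"
      "cw * third_order e d \<le> 1/32"
  shows "\<bar>ln (norm (mexp (e *\<^sub>R P + e\<^sup>2 *\<^sub>R P' + cscale (\<i> * of_real d) Q + E) *v x))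
          - log_norm_mexp_approx P P' Q e d x\<bar>
         \<le> 82 * (L ^ 3 + L * (L + L\<^sup>2) + 2 * (L + L\<^sup>2)\<^sup>2 + cw) * third_order e d"
proof -
  define a where "a = e *\<^sub>R (P *v x)"
  define b where "b = e\<^sup>2 *\<^sub>R (P' *v x) + cscale (\<i> * of_real d) Q *v x + (e\<^sup>2 / 2) *\<^sub>R (P *v (P *v x))"
  define y where "y = mexp (e *\<^sub>R P + e\<^sup>2 *\<^sub>R P' + cscale (\<i> * of_real d) Q + E) *v x"
  have L: "0 \<le> L" using P(1) norm_ge_zero order_trans by blast
  have "(L + 2 * C0) * (e\<^sup>2 + \<bar>d\<bar>) \<le> (L + L\<^sup>2 + 2 * C0) * (e\<^sup>2 + \<bar>d\<bar>)"
    by (intro mult_right_mono) auto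
  then have small_B: "(L + 2 * C0) * (e\<^sup>2 + \<bar>d\<bar>) \<le> 1/4" using small(2) by linarith
  have na: "norm a \<le> L * \<bar>e\<bar>" and nb: "norm b \<le> (L + L\<^sup>2) * (e\<^sup>2 + \<bar>d\<bar>)"
    unfolding a_def b_def by (rule mexp_perturbation_terms_le[OF P x])+
  have nw: "norm (y - (x + a + b)) \<le> cw * third_order e d"
    unfolding a_def b_def y_def cw_def
    by (rule mexp_perturbation_remainder_le[OF P E x ed C0]) (use small(1) small_B in linarith)+
  have "(L + L\<^sup>2) * (e\<^sup>2 + \<bar>d\<bar>) \<le> (L + L\<^sup>2 + 2 * C0) * (e\<^sup>2 + \<bar>d\<bar>)"
    using C0 by (intro mult_right_mono) auto
  then have "\<bar>ln (norm (x + a + b + (y - (x + a + b)))) - log_norm_approx x a b\<bar>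
      \<le> 82 * (third_order (L * \<bar>e\<bar>) ((L + L\<^sup>2) * (e\<^sup>2 + \<bar>d\<bar>)) + cw * third_order e d)"
    using small by (intro ln_norm_unit_perturbation[OF x na nb nw]) auto
  then have "\<bar>ln (norm y) - log_norm_approx x a b\<bar>
      \<le> 82 * (third_order (L * \<bar>e\<bar>) ((L + L\<^sup>2) * (e\<^sup>2 + \<bar>d\<bar>)) + cw * third_order e d)"
    by simp
  moreover have "third_order (L * \<bar>e\<bar>) ((L + L\<^sup>2) * (e\<^sup>2 + \<bar>d\<bar>))
      \<le> (L ^ 3 + L * (L + L\<^sup>2) + 2 * (L + L\<^sup>2)\<^sup>2) * third_order e d"
    using L ed by (intro third_order_le_weighted) (auto simp: abs_mult)
  moreover have "82 * (L ^ 3 + L * (L + L\<^sup>2) + 2 * (L + L\<^sup>2)\<^sup>2 + cw) * third_order e d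
      = 82 * ((L ^ 3 + L * (L + L\<^sup>2) + 2 * (L + L\<^sup>2)\<^sup>2) * third_order e d + cw * third_order e d)"
    by (simp add: algebra_simps)
  ultimately show ?thesis
    unfolding log_norm_mexp_approx_def y_def a_def b_def by (smt (verit))
qed

lemma ln_norm_mexp_second_order:
  fixes L C0 :: real
  assumes L: "0 \<le> L" and C0: "0 \<le> C0"
  obtains C r :: real where "0 < r"
    and "\<And>P P' Q E (x :: cvec) e d. norm P \<le> L \<Longrightarrow> norm P' \<le> L \<Longrightarrow> norm Q \<le> L \<Longrightarrow>
           norm E \<le> C0 * third_order e d \<Longrightarrow> norm x = 1 \<Longrightarrow> \<bar>e\<bar> < r \<Longrightarrow> \<bar>d\<bar> < r \<Longrightarrow>
           \<bar>ln (norm (mexp (e *\<^sub>R P + e\<^sup>2 *\<^sub>R P' + cscale (\<i> * of_real d) Q + E) *v x))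
             - log_norm_mexp_approx P P' Q e d x\<bar>
           \<le> C * third_order e d"
proof -
  define cw where "cw = 5 * (L ^ 3 + L * (L + 2 * C0) + 2 * (L + 2 * C0)\<^sup>2) + C0"
  define K where "K = 1 + L + L\<^sup>2 + 2 * C0 + cw"
  define r where "r = 1 / (256 * K)"
  have cw: "0 \<le> cw" using L C0 by (simp add: cw_def)
  have K: "0 < K" "1 \<le> K" "L \<le> K" "L + L\<^sup>2 + 2 * C0 \<le> K" "cw \<le> K"
    unfolding K_def using L C0 cw zero_le_power2[of L] by linarith+
  have scaled: "c * r \<le> 1/256" if "c \<le> K" for c
    using K(1) that by (simp add: r_def field_simps)
  show ?thesis
  proof (rule that)
    show "0 < r" using K by (simp add: r_def)
  next
    fix P P' Q E :: cmat and x :: cvec and e d :: real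
    assume P: "norm P \<le> L" "norm P' \<le> L" "norm Q \<le> L" and E: "norm E \<le> C0 * third_order e d"
      and x: "norm x = 1" and e: "\<bar>e\<bar> < r" and d: "\<bar>d\<bar> < r"
    have r1: "r \<le> 1/256" using scaled[OF K(2)] by simp
    then have ed: "\<bar>e\<bar> \<le> 1" "\<bar>d\<bar> \<le> 1" using e d by linarith+
    have "e\<^sup>2 \<le> \<bar>e\<bar>"
      using mult_right_mono[OF ed(1) abs_ge_zero[of e]] by (simp add: power2_eq_square abs_mult_self_eq)
    then have second: "e\<^sup>2 + \<bar>d\<bar> \<le> 2 * r" using e d by linarith
    have third: "third_order e d \<le> 4 * r"
      using third_order_le_second_order[OF ed] second by (smt (verit))
    have "L * \<bar>e\<bar> \<le> L * r" using e L by (intro mult_left_mono) auto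
    moreover have "(L + L\<^sup>2 + 2 * C0) * (e\<^sup>2 + \<bar>d\<bar>) \<le> (L + L\<^sup>2 + 2 * C0) * (2 * r)"
      using second L C0 by (intro mult_left_mono) auto
    moreover have "cw * third_order e d \<le> cw * (4 * r)"
      using third cw by (intro mult_left_mono)
    ultimately show "\<bar>ln (norm (mexp (e *\<^sub>R P + e\<^sup>2 *\<^sub>R P' + cscale (\<i> * of_real d) Q + E) *v x))
             - log_norm_mexp_approx P P' Q e d x\<bar>
           \<le> 82 * (L ^ 3 + L * (L + L\<^sup>2) + 2 * (L + L\<^sup>2)\<^sup>2 + cw) * third_order e d"
      using scaled[OF K(3)] scaled[OF K(4)] scaled[OF K(5)] unfolding cw_def
      by (intro ln_norm_mexp_second_order_bound[OF P E x ed C0]) (simp_all add: algebra_simps)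
  qed
qed

lemma ln_norm_Rot_mexp_uniform:
  fixes T :: "real \<Rightarrow> real \<Rightarrow> 's \<Rightarrow> cmat" and PP PP' QQ :: "'s \<Rightarrow> cmat" and \<eta> :: "'s \<Rightarrow> real"
  assumes bounded: "\<exists>K. \<forall>s\<in>S. norm (PP s) \<le> K \<and> norm (PP' s) \<le> K \<and> norm (QQ s) \<le> K"
    and expansion: "\<exists>C0. \<forall>s\<in>S. \<forall>e d. \<bar>e\<bar> < r0 \<longrightarrow> \<bar>d\<bar> < r0 \<longrightarrow>
           (\<exists>E. T e d s = Rot (\<eta> s) ** mexp (e *\<^sub>R PP s + e\<^sup>2 *\<^sub>R PP' s + cscale (\<i> * of_real d) (QQ s) + E)
                \<and> norm E \<le> C0 * third_order e d)"
    and r0: "0 < r0"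
  shows "\<exists>C r. 0 < r \<and> (\<forall>s\<in>S. \<forall>e d. \<forall>x. \<bar>e\<bar> < r \<longrightarrow> \<bar>d\<bar> < r \<longrightarrow> norm x = 1 \<longrightarrow>
           \<bar>ln (norm (T e d s *v x)) - log_norm_mexp_approx (PP s) (PP' s) (QQ s) e d x\<bar>
             \<le> C * third_order e d)"
proof -
  obtain K C0 where K: "\<forall>s\<in>S. norm (PP s) \<le> K \<and> norm (PP' s) \<le> K \<and> norm (QQ s) \<le> K"
    and C0: "\<forall>s\<in>S. \<forall>e d. \<bar>e\<bar> < r0 \<longrightarrow> \<bar>d\<bar> < r0 \<longrightarrow>
           (\<exists>E. T e d s = Rot (\<eta> s) ** mexp (e *\<^sub>R PP s + e\<^sup>2 *\<^sub>R PP' s + cscale (\<i> * of_real d) (QQ s) + E)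
                \<and> norm E \<le> C0 * third_order e d)"
    using bounded expansion by blast
  obtain C r where r: "0 < r" and estimate: "\<And>P P' Q E (x :: cvec) e d.
      norm P \<le> max K 0 \<Longrightarrow> norm P' \<le> max K 0 \<Longrightarrow> norm Q \<le> max K 0 \<Longrightarrow>
      norm E \<le> max C0 0 * third_order e d \<Longrightarrow> norm x = 1 \<Longrightarrow> \<bar>e\<bar> < r \<Longrightarrow> \<bar>d\<bar> < r \<Longrightarrow>
      \<bar>ln (norm (mexp (e *\<^sub>R P + e\<^sup>2 *\<^sub>R P' + cscale (\<i> * of_real d) Q + E) *v x))
        - log_norm_mexp_approx P P' Q e d x\<bar> \<le> C * third_order e d"
    by (rule ln_norm_mexp_second_order[of "max K 0" "max C0 0"]) auto
  have "\<bar>ln (norm (T e d s *v x)) - log_norm_mexp_approx (PP s) (PP' s) (QQ s) e d x\<bar> \<le> C * third_order e d"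
    if s: "s \<in> S" and e: "\<bar>e\<bar> < min r r0" and d: "\<bar>d\<bar> < min r r0" and x: "norm x = 1" for s e d x
  proof -
    obtain E where T: "T e d s
        = Rot (\<eta> s) ** mexp (e *\<^sub>R PP s + e\<^sup>2 *\<^sub>R PP' s + cscale (\<i> * of_real d) (QQ s) + E)"
      and E: "norm E \<le> C0 * third_order e d"
      using C0 s e d by (meson min_less_iff_conj)
    have "norm E \<le> max C0 0 * third_order e d"
      using E mult_right_mono[OF max.cobounded1 third_order_nonneg] by (rule order_trans)
    then show ?thesis
      unfolding T using K s e d x
      by (simp flip: matrix_vector_mul_assoc) (intro estimate; auto simp: le_max_iff_disj)
  qed
  then show ?thesis
    using r r0 by (intro exI[of _ C] exI[of _ "min r r0"]) auto
qed

section \<open>Quadratic forms of su(1,1) in the stereographic coordinate\<close>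

lemma su11_basis_combination:
  "p1 *\<^sub>R B1 + p2 *\<^sub>R B2 + p3 *\<^sub>R B3
     = mk2 (\<i> * of_real p3) (cnj (of_real p1 - \<i> * of_real p2)) (of_real p1 - \<i> * of_real p2) (- \<i> * of_real p3)"
  by (simp add: B1_def B2_def B3_def mk2_def vec_eq_iff forall_2; simp add: scaleR_conv_of_real complex_eq_iff)

lemma inner_su11_form:
  "inner x ((p1 *\<^sub>R B1 + p2 *\<^sub>R B2 + p3 *\<^sub>R B3) *v x)
     = 2 * Re ((of_real p1 - \<i> * of_real p2) * (x $ 1 * cnj (x $ 2)))"
  unfolding su11_basis_combination by (simp add: inner_cvec algebra_simps)

lemma inner_cscale_su11_form:
  "inner x (cscale (\<i> * of_real d) (q1 *\<^sub>R B1 + q2 *\<^sub>R B2 + q3 *\<^sub>R B3) *v x)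
     = d * q3 * ((cmod (x $ 2))\<^sup>2 - (cmod (x $ 1))\<^sup>2)"
proof -
  obtain a1 a2 b1 b2 where "x $ 1 = Complex a1 a2" "x $ 2 = Complex b1 b2"
    by (metis complex.exhaust_sel)
  then show ?thesis
    unfolding su11_basis_combination
    by (simp add: inner_cvec cscale_def cmod_power2) (simp add: algebra_simps power2_eq_square)
qed

text \<open>\<open>P\<^sup>2\<close> is \<open>|\<beta>|\<^sup>2 - p3\<^sup>2\<close> times the identity, and \<open>p3\<^sup>2\<close> cancels against \<open>\<parallel>P x\<parallel>\<^sup>2\<close>.\<close>

lemma su11_square_form:
  fixes x :: cvec and p1 p2 p3 :: real
  defines "P \<equiv> p1 *\<^sub>R B1 + p2 *\<^sub>R B2 + p3 *\<^sub>R B3" and "\<beta> \<equiv> of_real p1 - \<i> * of_real p2"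
  shows "inner x (P *v (P *v x)) + (norm (P *v x))\<^sup>2
     = 2 * (cmod \<beta>)\<^sup>2 * (norm x)\<^sup>2 + 4 * Re (\<i> * of_real p3 * \<beta> * (x $ 1 * cnj (x $ 2)))"
proof -
  obtain a1 a2 b1 b2 where "x $ 1 = Complex a1 a2" "x $ 2 = Complex b1 b2"
    by (metis complex.exhaust_sel)
  then show ?thesis
    unfolding P_def \<beta>_def su11_basis_combination norm_cvec_sq
    by (simp add: inner_cvec cmod_power2) (simp add: algebra_simps power2_eq_square)
qed

lemma power2_Re_eq: "(Re z)\<^sup>2 = ((cmod z)\<^sup>2 + Re (z\<^sup>2)) / 2"
  by (simp add: cmod_power2 Re_power2)

lemma lemma6_main_Some_unit:
  fixes a b \<beta> \<beta>' :: complex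
  assumes ab: "(cmod a)\<^sup>2 + (cmod b)\<^sup>2 = 1" and b: "b \<noteq> 0"
  defines "w \<equiv> a * cnj b"
  shows "lemma6_main e d \<beta> \<beta>' p3 q3 (Some (a / b))
     = 2 * e * Re (\<beta> * w) + e\<^sup>2 * (cmod \<beta>)\<^sup>2 * ((cmod a) ^ 4 + (cmod b) ^ 4)
       + d * q3 * ((cmod b)\<^sup>2 - (cmod a)\<^sup>2)
       + 2 * e\<^sup>2 * (Re ((\<beta>' + \<i> * of_real p3 * \<beta>) * w) - Re (\<beta>\<^sup>2 * w\<^sup>2))"
proof -
  define n where "n = (cmod b)\<^sup>2"
  have n: "0 < n" using b by (simp add: n_def)
  have z: "a / b = w / of_real n"
    using b by (simp add: w_def n_def field_simps flip: complex_norm_square)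
  have z_sq: "(cmod (a / b))\<^sup>2 = (1 - n) / n"
    using ab by (simp add: n_def norm_divide power_divide)
  have denom: "1 + (cmod (a / b))\<^sup>2 = 1 / n"
    using n by (simp add: z_sq field_simps)
  have Re1: "Re (c * (a / b)) = Re (c * w) / n" for c
    unfolding z by (simp add: Re_divide_of_real mult.assoc[symmetric])
  have Re2: "Re (c * (a / b)\<^sup>2) = Re (c * w\<^sup>2) / n\<^sup>2" for c
    unfolding z by (simp add: power_divide Re_divide_of_real mult.assoc[symmetric] flip: of_real_power)
  have four: "t ^ 4 = (t\<^sup>2)\<^sup>2" for t :: real
    by (simp flip: power_mult)
  have a_sq: "(cmod a)\<^sup>2 = 1 - n"
    using ab by (simp add: n_def)
  then have quartic: "(cmod a) ^ 4 = (1 - n)\<^sup>2" "(cmod b) ^ 4 = n\<^sup>2" "(cmod (a / b)) ^ 4 = ((1 - n) / n)\<^sup>2"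
    unfolding four z_sq by (simp_all add: n_def)
  show ?thesis
    using n unfolding lemma6_main_def option.case Re1 Re2 denom quartic z_sq a_sq n_def[symmetric]
    by (simp add: field_simps power2_eq_square)
qed

lemma lemma6_main_proj_unit:
  fixes x :: cvec
  assumes x: "norm x = 1"
  defines "w \<equiv> x $ 1 * cnj (x $ 2)"
  shows "lemma6_main e d \<beta> \<beta>' p3 q3 (proj x)
     = 2 * e * Re (\<beta> * w) + e\<^sup>2 * (cmod \<beta>)\<^sup>2 * ((cmod (x $ 1)) ^ 4 + (cmod (x $ 2)) ^ 4)
       + d * q3 * ((cmod (x $ 2))\<^sup>2 - (cmod (x $ 1))\<^sup>2)
       + 2 * e\<^sup>2 * (Re ((\<beta>' + \<i> * of_real p3 * \<beta>) * w) - Re (\<beta>\<^sup>2 * w\<^sup>2))"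
proof -
  have unit: "(cmod (x $ 1))\<^sup>2 + (cmod (x $ 2))\<^sup>2 = 1"
    using x norm_cvec_sq[of x] by simp
  show ?thesis
  proof (cases "x $ 2 = 0")
    case True
    then have "(cmod (x $ 1))\<^sup>2 = 1"
      using unit by simp
    then have "(cmod (x $ 1)) ^ 4 = 1"
      by (metis one_power2 power_mult numeral_Bit0 mult_2_right)
    with True unit show ?thesis
      by (simp add: w_def proj_def lemma6_main_def)
  next
    case False
    then show ?thesis
      using lemma6_main_Some_unit[OF unit False] by (simp add: w_def proj_def)
  qed
qed

lemma log_norm_approx_scaled:
  "log_norm_approx x (e *\<^sub>R u) (e\<^sup>2 *\<^sub>R v + y + (e\<^sup>2 / 2) *\<^sub>R z)
     = e * inner x u + e\<^sup>2 * inner x v + inner x y + e\<^sup>2 / 2 * (inner x z + (norm u)\<^sup>2) - e\<^sup>2 * (inner x u)\<^sup>2"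
  by (simp add: log_norm_approx_def inner_add_right power_mult_distrib algebra_simps)

lemma log_norm_mexp_approx_su11:
  fixes x :: cvec and e d p1 p2 p3 p1' p2' p3' q1 q2 q3 :: real
  assumes x: "norm x = 1"
  defines "P \<equiv> p1 *\<^sub>R B1 + p2 *\<^sub>R B2 + p3 *\<^sub>R B3"
    and "P' \<equiv> p1' *\<^sub>R B1 + p2' *\<^sub>R B2 + p3' *\<^sub>R B3"
    and "Q \<equiv> q1 *\<^sub>R B1 + q2 *\<^sub>R B2 + q3 *\<^sub>R B3"
    and "\<beta> \<equiv> of_real p1 - \<i> * of_real p2" and "\<beta>' \<equiv> of_real p1' - \<i> * of_real p2'"
  shows "log_norm_mexp_approx P P' Q e d x
         = lemma6_main e d \<beta> \<beta>' p3 q3 (proj x)"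
proof -
  define w where "w = x $ 1 * cnj (x $ 2)"
  define R R' R3 S where "R = Re (\<beta> * w)" and "R' = Re (\<beta>' * w)"
    and "R3 = Re (\<i> * of_real p3 * \<beta> * w)" and "S = Re (\<beta>\<^sup>2 * w\<^sup>2)"
  have unit: "(cmod (x $ 1))\<^sup>2 + (cmod (x $ 2))\<^sup>2 = 1"
    using x norm_cvec_sq[of x] by simp
  have P: "inner x (P *v x) = 2 * R" and P': "inner x (P' *v x) = 2 * R'"
    unfolding P_def P'_def R_def R'_def \<beta>_def \<beta>'_def w_def by (rule inner_su11_form)+
  have PP: "inner x (P *v (P *v x)) + (norm (P *v x))\<^sup>2 = 2 * (cmod \<beta>)\<^sup>2 + 4 * R3"
    using su11_square_form[of x p1 p2 p3] x by (simp add: P_def \<beta>_def w_def R3_def)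
  have R_sq: "R\<^sup>2 = ((cmod \<beta>)\<^sup>2 * (cmod w)\<^sup>2 + S) / 2"
    using power2_Re_eq[of "\<beta> * w"] unfolding R_def S_def by (simp only: norm_mult power_mult_distrib)
  have quartic: "(cmod (x $ 1)) ^ 4 + (cmod (x $ 2)) ^ 4 = 1 - 2 * (cmod w)\<^sup>2"
  proof -
    have "((cmod (x $ 1))\<^sup>2 + (cmod (x $ 2))\<^sup>2)\<^sup>2 = 1" using unit by simp
    then show ?thesis
      by (simp add: w_def norm_mult power_mult_distrib power2_eq_square power4_eq_xxxx algebra_simps)
  qed
  have "Re ((\<beta>' + \<i> * of_real p3 * \<beta>) * w) = R' + R3"
    by (simp add: R'_def R3_def algebra_simps)
  then have main: "lemma6_main e d \<beta> \<beta>' p3 q3 (proj x)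
      = 2 * e * R + e\<^sup>2 * (cmod \<beta>)\<^sup>2 * ((cmod (x $ 1)) ^ 4 + (cmod (x $ 2)) ^ 4)
        + d * q3 * ((cmod (x $ 2))\<^sup>2 - (cmod (x $ 1))\<^sup>2) + 2 * e\<^sup>2 * (R' + R3 - S)"
    unfolding lemma6_main_proj_unit[OF x] w_def[symmetric] R_def[symmetric] S_def[symmetric] by simp
  show ?thesis
    unfolding log_norm_mexp_approx_def log_norm_approx_scaled main P P' PP inner_cscale_su11_form[of x d q1 q2 q3, folded Q_def]
    using R_sq quartic by algebra
qed

theorem lemma6:
  fixes P :: "'s measure"
    and T :: "real \<Rightarrow> complex \<Rightarrow> 's \<Rightarrow> cmat"
    and eta :: "'s \<Rightarrow> real"
    and PP PP' QQ :: "'s \<Rightarrow> cmat"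
    and p1 p2 p3 p1' p2' p3' q1 q2 q3 :: "'s \<Rightarrow> real"
    and r0 :: real
  assumes prob: "prob_space P"
    and r0: "r0 > 0"
    and meas: "\<And>e d. \<bar>e\<bar> < r0 \<Longrightarrow> \<bar>d\<bar> < r0 \<Longrightarrow> (\<lambda>s. T e (of_real d) s) \<in> borel_measurable P"
    and C2: "\<And>s. s \<in> space P \<Longrightarrow>
               C2_on ({-r0<..<r0} \<times> {-r0<..<r0}) (\<lambda>(e, d). T e (of_real d) s)"
    and T00: "\<And>s. s \<in> space P \<Longrightarrow> T 0 0 s = Rot (eta s)"
    and Te0: "\<And>s e. s \<in> space P \<Longrightarrow> \<bar>e\<bar> < r0 \<Longrightarrow> T e 0 s \<in> SU11"
    and T0d: "\<And>s d. s \<in> space P \<Longrightarrow> \<bar>d\<bar> < r0 \<Longrightarrow> T 0 (\<i> * of_real d) s \<in> SU11"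
    and Tle: "\<And>s e d. s \<in> space P \<Longrightarrow> \<bar>e\<bar> < r0 \<Longrightarrow> 0 \<le> d \<Longrightarrow> d < r0 \<Longrightarrow>
               T e (of_real d) s \<in> SU11_le"
    and P_su: "\<And>s. s \<in> space P \<Longrightarrow> PP s \<in> su11 \<and> PP' s \<in> su11 \<and> QQ s \<in> su11"
    and P_dec: "\<And>s. s \<in> space P \<Longrightarrow> PP s = p1 s *\<^sub>R B1 + p2 s *\<^sub>R B2 + p3 s *\<^sub>R B3"
    and P'_dec: "\<And>s. s \<in> space P \<Longrightarrow> PP' s = p1' s *\<^sub>R B1 + p2' s *\<^sub>R B2 + p3' s *\<^sub>R B3"
    and Q_dec: "\<And>s. s \<in> space P \<Longrightarrow> QQ s = q1 s *\<^sub>R B1 + q2 s *\<^sub>R B2 + q3 s *\<^sub>R B3"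
    and bnd: "\<exists>K. \<forall>s\<in>space P. norm (PP s) \<le> K \<and> norm (PP' s) \<le> K \<and> norm (QQ s) \<le> K"
    and expansion: "\<exists>C. \<forall>s\<in>space P. \<forall>e d. \<bar>e\<bar> < r0 \<longrightarrow> \<bar>d\<bar> < r0 \<longrightarrow>
               (\<exists>E. T e (of_real d) s
                      = Rot (eta s) ** mexp (e *\<^sub>R PP s + e\<^sup>2 *\<^sub>R PP' s + cscale (\<i> * of_real d) (QQ s) + E)
                    \<and> norm E \<le> C * (\<bar>e\<bar>^3 + \<bar>e\<bar> * \<bar>d\<bar> + d\<^sup>2))"
    and irred: "\<And>e d. \<bar>e\<bar> < r0 \<Longrightarrow> \<bar>d\<bar> < r0 \<Longrightarrow> (e, d) \<noteq> (0, 0) \<Longrightarrow>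
               \<not> (\<exists>F. finite F \<and> F \<noteq> {} \<and>
                    (\<forall>A\<in>supp_law P (\<lambda>s. T e (of_real d) s). \<forall>w\<in>F. moeb A w \<in> F))"
    and noncpt: "\<And>e d. \<bar>e\<bar> < r0 \<Longrightarrow> \<bar>d\<bar> < r0 \<Longrightarrow> (e, d) \<noteq> (0, 0) \<Longrightarrow>
               \<not> compact (closure (semigrp (supp_law P (\<lambda>s. T e (of_real d) s))))"
  shows "\<exists>C r. r > 0 \<and> (\<forall>s\<in>space P. \<forall>e d. \<forall>x::cvec.
            \<bar>e\<bar> < r \<longrightarrow> \<bar>d\<bar> < r \<longrightarrow> norm x = 1 \<longrightarrow>
            \<bar>ln (norm (T e (of_real d) s *v x))
              - lemma6_main e d (complex_of_real (p1 s) - \<i> * complex_of_real (p2 s))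
                    (complex_of_real (p1' s) - \<i> * complex_of_real (p2' s)) (p3 s) (q3 s) (proj x)\<bar>
            \<le> C * (\<bar>e\<bar>^3 + \<bar>e\<bar> * \<bar>d\<bar> + d\<^sup>2))"
proof -
  \<comment> \<open>Only the expansion and the coordinates of \<open>PP\<close>, \<open>PP'\<close>, \<open>QQ\<close> enter.\<close>
  have "\<exists>C r. 0 < r \<and> (\<forall>s\<in>space P. \<forall>e d. \<forall>x. \<bar>e\<bar> < r \<longrightarrow> \<bar>d\<bar> < r \<longrightarrow> norm x = 1 \<longrightarrow>
      \<bar>ln (norm (T e (of_real d) s *v x)) - log_norm_mexp_approx (PP s) (PP' s) (QQ s) e d x\<bar>
        \<le> C * third_order e d)"
    using bnd expansion[folded third_order_def] r0
    by (rule ln_norm_Rot_mexp_uniform[where T = "\<lambda>e d. T e (of_real d)"])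
  moreover have "log_norm_mexp_approx (PP s) (PP' s) (QQ s) e d x
      = lemma6_main e d (complex_of_real (p1 s) - \<i> * complex_of_real (p2 s))
          (complex_of_real (p1' s) - \<i> * complex_of_real (p2' s)) (p3 s) (q3 s) (proj x)"
    if "s \<in> space P" "norm x = 1" for s e d x
    unfolding P_dec[OF that(1)] P'_dec[OF that(1)] Q_dec[OF that(1)] by (rule log_norm_mexp_approx_su11[OF that(2)])
  ultimately show ?thesis
    unfolding third_order_def by metis
qed

end
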